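(* Let $n\ge1$, $a_{i0}>0$, $a_{ij}\ge 0$ and $\pi_i>0$ for $i,j=1,\ldots,n$, and assume $$\kappa:=\min_{i=1,\ldots,n}\Big(8\pi_i a_{ii}-\sum_{j=1,\,j\neq i}^n\pi_j a_{ji}\Big)>0.$$ Let $\varepsilon>0$ and let $\mu_1,\ldots,\mu_n$ satisfy $\mu_i\ge\sum_{j\ne i}(a_{ij}+a_{ji})/2$. For $u\in(0,\infty)^n$ define $$A_{ij}(u)=\delta_{ij}a_{i0}+\delta_{ij}\sum_{k=1}^na_{ik}u_k+a_{ij}u_i,\quad A_\varepsilon(u)=A(u)+\varepsilon A^0(u),\quad A^0_{ij}(u)=\delta_{ij}\frac{\mu_i}{\pi_i}u_i^2,$$ $$H_{\varepsilon,ij}(u)=\delta_{ij}\Big(\frac{\pi_i}{u_i^2}+\frac{\varepsilon}{u_i}\Big),$$ and for $\eta>0$ write $u+\eta=(u_1+\eta,\ldots,u_n+\eta)$. Then there exists $\eta_0>0$ such that for all $0<\eta\le\eta_0$, $u\in(0,\infty)^n$ and $z\in\mathbb{R}^n$, $$z^TH_\varepsilon(u+\eta)A_\varepsilon(u)z\ge\frac{\kappa}{4}\sum_{i=1}^n\frac{z_i^2}{u_i+\eta}-\eta\varepsilon C_1\sum_{i=1}^n\frac{z_i^2}{u_i+\eta}-\eta\varepsilon^2C_2\sum_{i=1}^nz_i^2,$$ where $C_1>0$ depends only on $(a_{ij})$ and $(\mu_i)$, and $C_2>0$ depends only on $(\mu_i/\pi_i)$.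
   Context: $\delta_{ij}$ is the Kronecker symbol. *)

theory Defs
  imports Complex_Main
begin

text \<open>Indices i,j range over a finite type 'n (so n = CARD('n) >= 1).
  Vectors in R^n are functions 'n => real, n x n matrices are 'n => 'n => real.\<close>

definition kron :: "'n \<Rightarrow> 'n \<Rightarrow> real" where
  "kron i j = (if i = j then 1 else 0)"

definition Amat :: "('n \<Rightarrow> real) \<Rightarrow> ('n \<Rightarrow> 'n \<Rightarrow> real) \<Rightarrow> ('n::finite \<Rightarrow> real) \<Rightarrow> 'n \<Rightarrow> 'n \<Rightarrow> real" where
  "Amat a0 a u i j = kron i j * a0 i + kron i j * (\<Sum>k\<in>UNIV. a i k * u k) + a i j * u i"

definition A0mat :: "('n \<Rightarrow> real) \<Rightarrow> ('n \<Rightarrow> real) \<Rightarrow> ('n \<Rightarrow> real) \<Rightarrow> 'n \<Rightarrow> 'n \<Rightarrow> real" where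
  "A0mat \<mu> \<pi> u i j = kron i j * (\<mu> i / \<pi> i) * (u i)\<^sup>2"

definition Aeps :: "real \<Rightarrow> ('n \<Rightarrow> real) \<Rightarrow> ('n \<Rightarrow> 'n \<Rightarrow> real) \<Rightarrow> ('n \<Rightarrow> real) \<Rightarrow> ('n \<Rightarrow> real)
     \<Rightarrow> ('n::finite \<Rightarrow> real) \<Rightarrow> 'n \<Rightarrow> 'n \<Rightarrow> real" where
  "Aeps \<epsilon> a0 a \<mu> \<pi> u i j = Amat a0 a u i j + \<epsilon> * A0mat \<mu> \<pi> u i j"

definition Heps :: "real \<Rightarrow> ('n \<Rightarrow> real) \<Rightarrow> ('n \<Rightarrow> real) \<Rightarrow> 'n \<Rightarrow> 'n \<Rightarrow> real" where
  "Heps \<epsilon> \<pi> u i j = kron i j * (\<pi> i / (u i)\<^sup>2 + \<epsilon> / u i)"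

definition quad2 :: "('n::finite \<Rightarrow> 'n \<Rightarrow> real) \<Rightarrow> ('n \<Rightarrow> 'n \<Rightarrow> real) \<Rightarrow> ('n \<Rightarrow> real) \<Rightarrow> real" where
  "quad2 M N z = (\<Sum>i\<in>UNIV. \<Sum>j\<in>UNIV. z i * (\<Sum>k\<in>UNIV. M i k * N k j) * z j)"

definition kappa :: "('n::finite \<Rightarrow> 'n \<Rightarrow> real) \<Rightarrow> ('n \<Rightarrow> real) \<Rightarrow> real" where
  "kappa a \<pi> = Min (range (\<lambda>i. 8 * \<pi> i * a i i - (\<Sum>j\<in>UNIV - {i}. \<pi> j * a j i)))"

end

theory Submission
  imports Defs
begin

(* Since H_eps(u + eta) is diagonal, the quadratic form is the sum of h_i A_ij z_i z_j with
   h_i = pi_i/(u_i+eta)^2 + eps/(u_i+eta). For i ~= j, Young's inequality splits the cross term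
   h_i a_ij u_i z_i z_j into a part charged to z_i^2 and a part charged to z_j^2; moving the latter
   to row j, the diagonal entry of each row absorbs everything charged to its z_i^2. There the
   coupling sum_k a_ik u_k cancels up to eta (sum_{j~=i} a_ij + 2 a_ii), which a_i0 pays for once
   eta is small; the pi-parts are paid for by 8 pi_i a_ii - sum_j pi_j a_ji >= kappa, leaving
   kappa/4; and the eps-parts by mu_i >= sum_j (a_ij + a_ji)/2, up to the remainder
   eta eps (sum_j a_ji) z_i^2/(u_i+eta). *)

lemma ex_pos_bound_mult_le:
  fixes b c :: "'n::finite \<Rightarrow> real"
  assumes b: "\<And>i. 0 < b i" and c: "\<And>i. 0 \<le> c i"
  shows "\<exists>\<eta>0>0. \<forall>\<eta>\<le>\<eta>0. \<forall>i. \<eta> * c i \<le> b i"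
proof (intro exI conjI allI impI)
  define \<eta>0 where "\<eta>0 = Min (range (\<lambda>i. b i / (1 + c i)))"
  have c1: "0 < 1 + c i" for i using c[of i] by linarith
  show "0 < \<eta>0" unfolding \<eta>0_def using b c1 by (subst Min_gr_iff) auto
  fix \<eta> i assume "\<eta> \<le> \<eta>0"
  also have "\<eta>0 \<le> b i / (1 + c i)" unfolding \<eta>0_def by (rule Min_le) auto
  finally have "\<eta> * (1 + c i) \<le> b i" using c1 by (simp add: pos_le_divide_eq)
  then show "\<eta> * c i \<le> b i"
  proof (cases "0 \<le> \<eta>")
    case False
    then have "\<eta> * c i \<le> 0" using c[of i] by (simp add: mult_nonpos_nonneg)
    then show ?thesis using b[of i] by linarith
  qed (simp add: algebra_simps)
qed

lemma sum_offdiag_swap: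
  fixes F :: "'n::finite \<Rightarrow> 'n \<Rightarrow> 'a::comm_monoid_add"
  shows "(\<Sum>i\<in>UNIV. \<Sum>j\<in>UNIV - {i}. F i j) = (\<Sum>i\<in>UNIV. \<Sum>j\<in>UNIV - {i}. F j i)"
  using sum.swap_restrict[of UNIV UNIV "\<lambda>i j. F i j" "\<lambda>i j. j \<noteq> i"]
  by (simp add: Diff_eq Compl_eq eq_commute)

lemma sum_offdiag_lower_bound:
  fixes F X Y :: "'n::finite \<Rightarrow> 'n \<Rightarrow> real"
  assumes "\<And>i j. i \<noteq> j \<Longrightarrow> X i j + Y i j \<le> F i j"
  shows "(\<Sum>i\<in>UNIV. F i i + (\<Sum>j\<in>UNIV - {i}. X i j) + (\<Sum>j\<in>UNIV - {i}. Y j i))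
    \<le> (\<Sum>i\<in>UNIV. \<Sum>j\<in>UNIV. F i j)"
proof -
  have "(\<Sum>i\<in>UNIV. F i i + (\<Sum>j\<in>UNIV - {i}. X i j) + (\<Sum>j\<in>UNIV - {i}. Y j i))
      = (\<Sum>i\<in>UNIV. F i i + (\<Sum>j\<in>UNIV - {i}. X i j + Y i j))"
    using sum_offdiag_swap[of Y] by (simp add: sum.distrib)
  also have "\<dots> \<le> (\<Sum>i\<in>UNIV. F i i + (\<Sum>j\<in>UNIV - {i}. F i j))"
    using assms by (intro sum_mono add_left_mono) auto
  also have "\<dots> = (\<Sum>i\<in>UNIV. \<Sum>j\<in>UNIV. F i j)"
    by (intro sum.cong refl) (metis finite UNIV_I sum.remove)
  finally show ?thesis .
qed

lemma sum_offdiag_column_le_total: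
  fixes a :: "'n::finite \<Rightarrow> 'n \<Rightarrow> real"
  assumes "\<And>i j. 0 \<le> a i j"
  shows "(\<Sum>j\<in>UNIV - {i}. a j i) \<le> (\<Sum>j\<in>UNIV. \<Sum>k\<in>UNIV. a j k)"
proof -
  have "(\<Sum>j\<in>UNIV - {i}. a j i) \<le> (\<Sum>j\<in>UNIV. a j i)"
    using assms by (intro sum_mono2) auto
  also have "\<dots> \<le> (\<Sum>j\<in>UNIV. \<Sum>k\<in>UNIV. a j k)"
    using assms by (intro sum_mono member_le_sum) auto
  finally show ?thesis .
qed

lemma cross_term_quadratic_bound:
  fixes ui vi vj zi zj :: real
  assumes "0 \<le> ui" "ui \<le> vi" "0 < vi" "0 < vj"
  shows "- (vj * zi\<^sup>2 / vi\<^sup>2 + zj\<^sup>2 / (4 * vj)) \<le> ui * zi * zj / vi\<^sup>2"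
proof -
  define x where "x = zi / vi"
  have young: "\<bar>x * zj\<bar> \<le> vj * x\<^sup>2 + zj\<^sup>2 / (4 * vj)"
  proof -
    have "0 \<le> (2 * vj * \<bar>x\<bar> - \<bar>zj\<bar>)\<^sup>2 / (4 * vj)" using assms by simp
    also have "\<dots> = vj * x\<^sup>2 + zj\<^sup>2 / (4 * vj) - \<bar>x * zj\<bar>"
      using assms by (simp add: field_simps power2_eq_square abs_mult)
    finally show ?thesis by simp
  qed
  have "\<bar>ui * zi * zj / vi\<^sup>2\<bar> = ui / vi * \<bar>x * zj\<bar>"
    using assms by (simp add: x_def abs_mult power2_eq_square)
  also have "\<dots> \<le> \<bar>x * zj\<bar>"
    using assms by (intro mult_left_le_one_le) auto
  finally have "\<bar>ui * zi * zj / vi\<^sup>2\<bar> \<le> vj * zi\<^sup>2 / vi\<^sup>2 + zj\<^sup>2 / (4 * vj)"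
    using young by (simp add: x_def power_divide)
  from abs_le_D2[OF this] show ?thesis by linarith
qed

lemma cross_term_linear_bound:
  fixes ui uj \<eta> zi zj :: real
  assumes "0 \<le> ui" "0 \<le> uj" "0 < \<eta>"
  shows "- (ui\<^sup>2 * zi\<^sup>2 / (2 * (ui + \<eta>)\<^sup>2) + uj\<^sup>2 * zj\<^sup>2 / (2 * (uj + \<eta>)\<^sup>2) + \<eta> * zj\<^sup>2 / (uj + \<eta>))
    \<le> ui * zi * zj / (ui + \<eta>)"
proof -
  define ti where "ti = ui / (ui + \<eta>)"
  define tj where "tj = uj / (uj + \<eta>)"
  have "tj \<le> 1" using assms by (simp add: tj_def)
  have "0 \<le> (ti * zi + zj)\<^sup>2" by simp
  then have i: "- ((ti * zi)\<^sup>2 + zj\<^sup>2) \<le> 2 * (ti * zi * zj)"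
    by (simp add: power2_eq_square algebra_simps)
  have "0 \<le> (1 - tj)\<^sup>2 * zj\<^sup>2" by simp
  then have j: "zj\<^sup>2 \<le> (tj * zj)\<^sup>2 + 2 * ((1 - tj) * zj\<^sup>2)"
    by (simp add: power2_eq_square algebra_simps)
  have "- ((ti * zi)\<^sup>2 / 2 + (tj * zj)\<^sup>2 / 2 + (1 - tj) * zj\<^sup>2) \<le> ti * zi * zj"
    using i j by linarith
  moreover have "1 - tj = \<eta> / (uj + \<eta>)" using assms by (simp add: tj_def field_simps)
  ultimately show ?thesis
    by (simp add: ti_def tj_def power_divide power_mult_distrib)
qed

lemma cross_term_bound:
  fixes p a \<epsilon> ui uj \<eta> zi zj :: real
  assumes "0 \<le> p" "0 \<le> a" "0 \<le> \<epsilon>" "0 \<le> ui" "0 \<le> uj" "0 < \<eta>"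
  shows "- (p * zi\<^sup>2 / (ui + \<eta>)\<^sup>2 * (a * (uj + \<eta>)) + \<epsilon> * ui\<^sup>2 * zi\<^sup>2 / (2 * (ui + \<eta>)\<^sup>2) * a)
       - (zj\<^sup>2 / (4 * (uj + \<eta>)) * (p * a)
          + (\<epsilon> * uj\<^sup>2 * zj\<^sup>2 / (2 * (uj + \<eta>)\<^sup>2) + \<epsilon> * \<eta> * zj\<^sup>2 / (uj + \<eta>)) * a)
     \<le> (p / (ui + \<eta>)\<^sup>2 + \<epsilon> / (ui + \<eta>)) * (a * ui) * zi * zj"
proof -
  have "p * a * - ((uj + \<eta>) * zi\<^sup>2 / (ui + \<eta>)\<^sup>2 + zj\<^sup>2 / (4 * (uj + \<eta>)))
      \<le> p * a * (ui * zi * zj / (ui + \<eta>)\<^sup>2)"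
    using assms by (intro mult_left_mono cross_term_quadratic_bound) auto
  moreover have "\<epsilon> * a * - (ui\<^sup>2 * zi\<^sup>2 / (2 * (ui + \<eta>)\<^sup>2) + uj\<^sup>2 * zj\<^sup>2 / (2 * (uj + \<eta>)\<^sup>2) + \<eta> * zj\<^sup>2 / (uj + \<eta>))
      \<le> \<epsilon> * a * (ui * zi * zj / (ui + \<eta>))"
    using assms by (intro mult_left_mono cross_term_linear_bound) auto
  ultimately show ?thesis by (simp add: algebra_simps)
qed

(* Row i of the quadratic form: s = z_i^2, v = u_i + eta, p = pi_i, B1 = sum_{j~=i} a_ij u_j,
   Bs and Bt are the off-diagonal row and column sums of a, and Pt = sum_{j~=i} pi_j a_ji. *)
lemma row_lower_bound:
  fixes p s u v \<eta> \<epsilon> a0 aii B1 Bs Bt Pt \<mu> \<kappa> C :: real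
  assumes v: "v = u + \<eta>" and "0 < p" "0 \<le> s" "0 \<le> u" "0 < \<eta>" "0 < \<epsilon>"
    and "0 \<le> aii" "0 \<le> B1" "0 \<le> Bs" "0 \<le> Bt"
    and a0: "\<eta> * (Bs + 2 * aii) \<le> a0" and \<mu>: "(Bs + Bt) / 2 \<le> \<mu>"
    and "\<kappa> \<le> 8 * p * aii - Pt" and "Bt \<le> C"
  shows "\<kappa> / 4 * (s / v) - \<eta> * \<epsilon> * C * (s / v)
    \<le> (p / v\<^sup>2 + \<epsilon> / v) * s * (a0 + 2 * aii * u + B1 + \<epsilon> * (\<mu> / p) * u\<^sup>2)
       - (p * s / v\<^sup>2 * (B1 + \<eta> * Bs) + \<epsilon> * u\<^sup>2 * s / (2 * v\<^sup>2) * Bs)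
       - (s / (4 * v) * Pt + (\<epsilon> * u\<^sup>2 * s / (2 * v\<^sup>2) + \<epsilon> * \<eta> * s / v) * Bt)"
proof -
  have "0 < v" "0 \<le> a0" "0 \<le> \<mu>"
    using assms by (auto intro: order_trans[OF _ a0] order_trans[OF _ \<mu>])
  have u: "u = v - \<eta>" using v by simp
  have "(p / v\<^sup>2 + \<epsilon> / v) * s * (a0 + 2 * aii * u + B1 + \<epsilon> * (\<mu> / p) * u\<^sup>2)
       - (p * s / v\<^sup>2 * (B1 + \<eta> * Bs) + \<epsilon> * u\<^sup>2 * s / (2 * v\<^sup>2) * Bs)
       - (s / (4 * v) * Pt + (\<epsilon> * u\<^sup>2 * s / (2 * v\<^sup>2) + \<epsilon> * \<eta> * s / v) * Bt)
       - (\<kappa> / 4 * (s / v) - \<eta> * \<epsilon> * C * (s / v))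
     = p * s / v\<^sup>2 * (a0 - \<eta> * (Bs + 2 * aii))
       + \<epsilon> * s / v * (a0 + 2 * aii * u + B1)
       + \<epsilon>\<^sup>2 * \<mu> * u\<^sup>2 * s / (p * v)
       + s / (4 * v) * (8 * p * aii - Pt - \<kappa>)
       + \<epsilon> * u\<^sup>2 * s / v\<^sup>2 * (\<mu> - (Bs + Bt) / 2)
       + \<eta> * \<epsilon> * s / v * (C - Bt)"
    using \<open>0 < v\<close> \<open>0 < p\<close> unfolding u by (simp add: field_simps power2_eq_square)
  also have "0 \<le> \<dots>"
    using assms \<open>0 < v\<close> \<open>0 \<le> a0\<close> \<open>0 \<le> \<mu>\<close> by (intro add_nonneg_nonneg mult_nonneg_nonneg) auto
  finally show ?thesis by simp
qed

lemma quad2_Heps: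
  "quad2 (Heps \<epsilon> \<pi> v) N z = (\<Sum>i\<in>UNIV. \<Sum>j\<in>UNIV. z i * ((\<pi> i / (v i)\<^sup>2 + \<epsilon> / v i) * N i j) * z j)"
  unfolding quad2_def Heps_def kron_def by (simp add: mult.assoc flip: of_bool_def)

lemma Aeps_diag:
  "Aeps \<epsilon> a0 a \<mu> \<pi> u i i
    = a0 i + 2 * a i i * u i + (\<Sum>j\<in>UNIV - {i}. a i j * u j) + \<epsilon> * (\<mu> i / \<pi> i) * (u i)\<^sup>2"
  using sum.remove[of UNIV i "\<lambda>j. a i j * u j"] by (simp add: Aeps_def Amat_def A0mat_def kron_def)

lemma Aeps_offdiag: "i \<noteq> j \<Longrightarrow> Aeps \<epsilon> a0 a \<mu> \<pi> u i j = a i j * u i"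
  by (simp add: Aeps_def Amat_def A0mat_def kron_def)

lemma kappa_le: "kappa a \<pi> \<le> 8 * \<pi> i * a i i - (\<Sum>j\<in>UNIV - {i}. \<pi> j * a j i)"
  unfolding kappa_def by (rule Min_le) auto

lemma quad2_Heps_Aeps_lower_bound:
  fixes a0 u z :: "'n::finite \<Rightarrow> real" and a :: "'n \<Rightarrow> 'n \<Rightarrow> real"
  assumes a: "\<And>i j. 0 \<le> a i j" and \<pi>: "\<And>i. 0 < \<pi> i" and \<epsilon>: "0 < \<epsilon>"
    and \<mu>: "\<And>i. (\<Sum>j\<in>UNIV - {i}. (a i j + a j i) / 2) \<le> \<mu> i"
    and \<eta>: "0 < \<eta>" and a0: "\<And>i. \<eta> * ((\<Sum>j\<in>UNIV - {i}. a i j) + 2 * a i i) \<le> a0 i"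
    and C: "\<And>i. (\<Sum>j\<in>UNIV - {i}. a j i) \<le> C"
    and u: "\<And>i. 0 < u i"
  shows "kappa a \<pi> / 4 * (\<Sum>i\<in>UNIV. (z i)\<^sup>2 / (u i + \<eta>))
      - \<eta> * \<epsilon> * C * (\<Sum>i\<in>UNIV. (z i)\<^sup>2 / (u i + \<eta>))
    \<le> quad2 (Heps \<epsilon> \<pi> (\<lambda>i. u i + \<eta>)) (Aeps \<epsilon> a0 a \<mu> \<pi> u) z"
proof -
  define v where "v i = u i + \<eta>" for i
  define F where "F i j = z i * ((\<pi> i / (v i)\<^sup>2 + \<epsilon> / v i) * Aeps \<epsilon> a0 a \<mu> \<pi> u i j) * z j" for i j
  define X where "X i j = - (\<pi> i * (z i)\<^sup>2 / (v i)\<^sup>2 * (a i j * v j)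
    + \<epsilon> * (u i)\<^sup>2 * (z i)\<^sup>2 / (2 * (v i)\<^sup>2) * a i j)" for i j
  define Y where "Y i j = - ((z j)\<^sup>2 / (4 * v j) * (\<pi> i * a i j)
    + (\<epsilon> * (u j)\<^sup>2 * (z j)\<^sup>2 / (2 * (v j)\<^sup>2) + \<epsilon> * \<eta> * (z j)\<^sup>2 / v j) * a i j)" for i j
  have row: "kappa a \<pi> / 4 * ((z i)\<^sup>2 / v i) - \<eta> * \<epsilon> * C * ((z i)\<^sup>2 / v i)
    \<le> F i i + (\<Sum>j\<in>UNIV - {i}. X i j) + (\<Sum>j\<in>UNIV - {i}. Y j i)" for i
  proof -
    have F_ii: "F i i = (\<pi> i / (v i)\<^sup>2 + \<epsilon> / v i) * (z i)\<^sup>2 * Aeps \<epsilon> a0 a \<mu> \<pi> u i i"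
      by (simp add: F_def power2_eq_square)
    have X_sum: "(\<Sum>j\<in>UNIV - {i}. X i j) = - (\<pi> i * (z i)\<^sup>2 / (v i)\<^sup>2 * (\<Sum>j\<in>UNIV - {i}. a i j * v j)
        + \<epsilon> * (u i)\<^sup>2 * (z i)\<^sup>2 / (2 * (v i)\<^sup>2) * (\<Sum>j\<in>UNIV - {i}. a i j))"
      unfolding X_def by (simp only: sum_negf sum.distrib sum_distrib_left)
    have Y_sum: "(\<Sum>j\<in>UNIV - {i}. Y j i) = - ((z i)\<^sup>2 / (4 * v i) * (\<Sum>j\<in>UNIV - {i}. \<pi> j * a j i)
        + (\<epsilon> * (u i)\<^sup>2 * (z i)\<^sup>2 / (2 * (v i)\<^sup>2) + \<epsilon> * \<eta> * (z i)\<^sup>2 / v i) * (\<Sum>j\<in>UNIV - {i}. a j i))"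
      unfolding Y_def by (simp only: sum_negf sum.distrib sum_distrib_left)
    have v_sum: "(\<Sum>j\<in>UNIV - {i}. a i j * v j)
        = (\<Sum>j\<in>UNIV - {i}. a i j * u j) + \<eta> * (\<Sum>j\<in>UNIV - {i}. a i j)"
      by (simp add: v_def algebra_simps sum.distrib sum_distrib_left)
    show ?thesis
      unfolding F_ii X_sum Y_sum v_sum Aeps_diag add_uminus_conv_diff
    proof (rule row_lower_bound[OF v_def \<pi> _ _ \<eta> \<epsilon> a])
      show "((\<Sum>j\<in>UNIV - {i}. a i j) + (\<Sum>j\<in>UNIV - {i}. a j i)) / 2 \<le> \<mu> i"
        using \<mu>[of i] by (simp only: sum_divide_distrib[symmetric] sum.distrib)
    qed (use a a0 C kappa_le u[THEN less_imp_le] in \<open>auto intro!: sum_nonneg mult_nonneg_nonneg\<close>)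
  qed
  have "(\<Sum>i\<in>UNIV. kappa a \<pi> / 4 * ((z i)\<^sup>2 / v i) - \<eta> * \<epsilon> * C * ((z i)\<^sup>2 / v i))
      \<le> (\<Sum>i\<in>UNIV. F i i + (\<Sum>j\<in>UNIV - {i}. X i j) + (\<Sum>j\<in>UNIV - {i}. Y j i))"
    by (intro sum_mono row)
  also have "\<dots> \<le> (\<Sum>i\<in>UNIV. \<Sum>j\<in>UNIV. F i j)"
  proof (rule sum_offdiag_lower_bound)
    fix i j :: 'n assume "i \<noteq> j"
    then show "X i j + Y i j \<le> F i j"
      unfolding X_def Y_def F_def v_def Aeps_offdiag[OF \<open>i \<noteq> j\<close>]
      using cross_term_bound[of "\<pi> i" "a i j" \<epsilon> "u i" "u j" \<eta> "z i" "z j"] a \<pi> \<epsilon> u \<eta>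
      by (simp add: less_imp_le mult_ac)
  qed
  also have "\<dots> = quad2 (Heps \<epsilon> \<pi> (\<lambda>i. u i + \<eta>)) (Aeps \<epsilon> a0 a \<mu> \<pi> u) z"
    by (simp add: quad2_Heps F_def v_def)
  finally show ?thesis by (simp add: v_def sum_subtractf sum_distrib_left)
qed

lemma ex_eta0_quad2_Heps_Aeps_lower_bound:
  fixes a0 :: "'n::finite \<Rightarrow> real" and a :: "'n \<Rightarrow> 'n \<Rightarrow> real"
  assumes a0: "\<And>i. 0 < a0 i" and a: "\<And>i j. 0 \<le> a i j" and \<pi>: "\<And>i. 0 < \<pi> i" and \<epsilon>: "0 < \<epsilon>"
    and \<mu>: "\<And>i. (\<Sum>j\<in>UNIV - {i}. (a i j + a j i) / 2) \<le> \<mu> i"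
    and C: "\<And>i. (\<Sum>j\<in>UNIV - {i}. a j i) \<le> C" and c: "0 \<le> c"
  shows "\<exists>\<eta>0>0. \<forall>\<eta> u z. 0 < \<eta> \<and> \<eta> \<le> \<eta>0 \<and> (\<forall>i. u i > 0) \<longrightarrow>
      quad2 (Heps \<epsilon> \<pi> (\<lambda>i. u i + \<eta>)) (Aeps \<epsilon> a0 a \<mu> \<pi> u) z
      \<ge> kappa a \<pi> / 4 * (\<Sum>i\<in>UNIV. (z i)\<^sup>2 / (u i + \<eta>))
        - \<eta> * \<epsilon> * C * (\<Sum>i\<in>UNIV. (z i)\<^sup>2 / (u i + \<eta>))
        - \<eta> * \<epsilon>\<^sup>2 * c * (\<Sum>i\<in>UNIV. (z i)\<^sup>2)"
    (is "\<exists>\<eta>0>0. \<forall>\<eta> u z. _ \<longrightarrow> ?bound \<eta> u z")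
proof -
  have row_nonneg: "0 \<le> (\<Sum>j\<in>UNIV - {i}. a i j) + 2 * a i i" for i
    using a by (simp add: sum_nonneg)
  obtain \<eta>0 where "0 < \<eta>0"
    and \<eta>0: "\<forall>\<eta>\<le>\<eta>0. \<forall>i. \<eta> * ((\<Sum>j\<in>UNIV - {i}. a i j) + 2 * a i i) \<le> a0 i"
    using ex_pos_bound_mult_le[of a0 "\<lambda>i. (\<Sum>j\<in>UNIV - {i}. a i j) + 2 * a i i"] a0 row_nonneg
    by blast
  show ?thesis
  proof (intro exI[of _ \<eta>0] conjI allI impI)
    fix \<eta> and u z :: "'n \<Rightarrow> real"
    assume "0 < \<eta> \<and> \<eta> \<le> \<eta>0 \<and> (\<forall>i. u i > 0)"
    then have "kappa a \<pi> / 4 * (\<Sum>i\<in>UNIV. (z i)\<^sup>2 / (u i + \<eta>))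
        - \<eta> * \<epsilon> * C * (\<Sum>i\<in>UNIV. (z i)\<^sup>2 / (u i + \<eta>))
      \<le> quad2 (Heps \<epsilon> \<pi> (\<lambda>i. u i + \<eta>)) (Aeps \<epsilon> a0 a \<mu> \<pi> u) z"
      using \<eta>0 by (intro quad2_Heps_Aeps_lower_bound a \<pi> \<epsilon> \<mu> C) auto
    moreover have "0 \<le> \<eta> * \<epsilon>\<^sup>2 * c * (\<Sum>i\<in>UNIV. (z i)\<^sup>2)"
      using \<open>0 < \<eta> \<and> _\<close> c by (simp add: sum_nonneg)
    ultimately show "?bound \<eta> u z" by linarith
  qed (rule \<open>0 < \<eta>0\<close>)
qed

theorem lemma11:
  "\<exists>(C1 :: ('n::finite \<Rightarrow> 'n \<Rightarrow> real) \<Rightarrow> ('n \<Rightarrow> real) \<Rightarrow> real)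
     (C2 :: ('n \<Rightarrow> real) \<Rightarrow> real).
   \<forall>(a0 :: 'n \<Rightarrow> real) (a :: 'n \<Rightarrow> 'n \<Rightarrow> real) (\<pi> :: 'n \<Rightarrow> real) (\<mu> :: 'n \<Rightarrow> real) (\<epsilon> :: real).
     (\<forall>i. a0 i > 0) \<and> (\<forall>i j. a i j \<ge> 0) \<and> (\<forall>i. \<pi> i > 0) \<and> kappa a \<pi> > 0 \<and> \<epsilon> > 0 \<and>
     (\<forall>i. \<mu> i \<ge> (\<Sum>j\<in>UNIV - {i}. (a i j + a j i) / 2))
     \<longrightarrow> C1 a \<mu> > 0 \<and> C2 (\<lambda>i. \<mu> i / \<pi> i) > 0 \<and>
         (\<exists>\<eta>0 > 0. \<forall>\<eta> (u :: 'n \<Rightarrow> real) (z :: 'n \<Rightarrow> real).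
            0 < \<eta> \<and> \<eta> \<le> \<eta>0 \<and> (\<forall>i. u i > 0) \<longrightarrow>
            quad2 (Heps \<epsilon> \<pi> (\<lambda>i. u i + \<eta>)) (Aeps \<epsilon> a0 a \<mu> \<pi> u) z
            \<ge> kappa a \<pi> / 4 * (\<Sum>i\<in>UNIV. (z i)\<^sup>2 / (u i + \<eta>))
              - \<eta> * \<epsilon> * C1 a \<mu> * (\<Sum>i\<in>UNIV. (z i)\<^sup>2 / (u i + \<eta>))
              - \<eta> * \<epsilon>\<^sup>2 * C2 (\<lambda>i. \<mu> i / \<pi> i) * (\<Sum>i\<in>UNIV. (z i)\<^sup>2))"
  by (intro exI[of _ "\<lambda>a \<mu>. 1 + (\<Sum>i\<in>UNIV. \<Sum>j\<in>UNIV. a i j)"] exI[of _ "\<lambda>_. 1"]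
      allI impI conjI ex_eta0_quad2_Heps_Aeps_lower_bound)
    (auto intro!: add_pos_nonneg sum_nonneg add_increasing sum_offdiag_column_le_total)

end
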